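(* Let $(R,\mathfrak m,k)$ be a one-dimensional analytically irreducible local domain with canonical map $k\to\overline R/\mathfrak n$ an isomorphism, with $v,a_i,n,I_i$ as in the context, and let $1\le i\le n-2$. The following are equivalent: (1) for every $r\in R$ with $v(r)=a_i$, $I_iI_{i+2}=rI_{i+2}$; (2) there exists $q\in R$ with $v(q)=a_i$ and $I_iI_{i+2}=qI_{i+2}$. If moreover $i\le n-3$ and $s\in R$ is an element with $v(s)=a_{i+1}$ and $I_{i+1}I_{i+3}=sI_{i+3}$, then (1) and (2) are also equivalent to: (3) there exists $q\in R$ with $v(q)=a_i$ and $sI_{i+2}\subseteq (q)$.
   Context: $\overline R$ is the integral closure of $R$ in $Q(R)$, assumed finitely generated over $R$ and local with maximal ideal $\mathfrak n$; $v$ is the normalized valuation of $\overline R$; $v(R)=\{a_0=0<a_1<\cdots\}$; $n$ is the smallest integer with $a_{n+i}=a_n+i$ for all $i\ge 0$; $I_j=\{r\in R\mid v(r)\ge a_j\}$ for $0\le j\le n$. *)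

theory Defs
  imports "HOL-Computational_Algebra.Polynomial"
begin

text \<open>All rings are subrings of a fixed field of type 'a, which plays the role of Q(R).\<close>

definition subring :: "'a::field set \<Rightarrow> bool" where
  "subring R \<longleftrightarrow> 0 \<in> R \<and> 1 \<in> R \<and> (\<forall>x\<in>R. \<forall>y\<in>R. x + y \<in> R \<and> x - y \<in> R \<and> x * y \<in> R)"

definition is_ideal :: "'a::field set \<Rightarrow> 'a set \<Rightarrow> bool" where
  "is_ideal R I \<longleftrightarrow> I \<subseteq> R \<and> 0 \<in> I \<and> (\<forall>x\<in>I. \<forall>y\<in>I. x + y \<in> I) \<and> (\<forall>r\<in>R. \<forall>x\<in>I. r * x \<in> I)"

definition is_prime_ideal :: "'a::field set \<Rightarrow> 'a set \<Rightarrow> bool" where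
  "is_prime_ideal R P \<longleftrightarrow> is_ideal R P \<and> P \<noteq> R \<and> (\<forall>x\<in>R. \<forall>y\<in>R. x * y \<in> P \<longrightarrow> x \<in> P \<or> y \<in> P)"

definition is_maximal_ideal :: "'a::field set \<Rightarrow> 'a set \<Rightarrow> bool" where
  "is_maximal_ideal R M \<longleftrightarrow> is_ideal R M \<and> M \<noteq> R \<and> (\<forall>J. is_ideal R J \<and> M \<subseteq> J \<longrightarrow> J = M \<or> J = R)"

definition gen_ideal :: "'a::field set \<Rightarrow> 'a set \<Rightarrow> 'a set" where
  "gen_ideal R S = {sum_list (map (\<lambda>(c, x). c * x) cs) | cs. set cs \<subseteq> R \<times> S}"

definition local_ring :: "'a::field set \<Rightarrow> bool" where
  "local_ring R \<longleftrightarrow> (\<exists>!M. is_maximal_ideal R M)"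

definition noetherian_ring :: "'a::field set \<Rightarrow> bool" where
  "noetherian_ring R \<longleftrightarrow> (\<forall>I. is_ideal R I \<longrightarrow> (\<exists>F. finite F \<and> F \<subseteq> I \<and> I = gen_ideal R F))"

definition krull_dim_one :: "'a::field set \<Rightarrow> bool" where
  "krull_dim_one R \<longleftrightarrow>
     (\<exists>P0 P1. is_prime_ideal R P0 \<and> is_prime_ideal R P1 \<and> P0 \<subset> P1) \<and>
     \<not> (\<exists>P0 P1 P2. is_prime_ideal R P0 \<and> is_prime_ideal R P1 \<and> is_prime_ideal R P2 \<and> P0 \<subset> P1 \<and> P1 \<subset> P2)"

definition is_quotient_field_of :: "'a::field set \<Rightarrow> bool" where
  "is_quotient_field_of R \<longleftrightarrow> (\<forall>x. \<exists>a\<in>R. \<exists>b\<in>R. b \<noteq> 0 \<and> x = a / b)"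

definition integral_closure :: "'a::field set \<Rightarrow> 'a set" where
  "integral_closure R = {x. \<exists>p. lead_coeff p = 1 \<and> (\<forall>i. coeff p i \<in> R) \<and> poly p x = 0}"

definition fin_gen_module :: "'a::field set \<Rightarrow> 'a set \<Rightarrow> bool" where
  "fin_gen_module R S \<longleftrightarrow> (\<exists>B. finite B \<and> S = gen_ideal R B)"

text \<open>v is the normalized discrete valuation of the quotient field whose valuation ring is S
  (its value at 0 is irrelevant and never used).\<close>
definition normalized_valuation_of :: "('a::field \<Rightarrow> int) \<Rightarrow> 'a set \<Rightarrow> bool" where
  "normalized_valuation_of v S \<longleftrightarrow>
     (\<forall>x y. x \<noteq> 0 \<and> y \<noteq> 0 \<longrightarrow> v (x * y) = v x + v y) \<and>
     (\<forall>x y. x \<noteq> 0 \<and> y \<noteq> 0 \<and> x + y \<noteq> 0 \<longrightarrow> v (x + y) \<ge> min (v x) (v y)) \<and>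
     (\<exists>t. t \<noteq> 0 \<and> v t = 1) \<and>
     S = {x. x = 0 \<or> v x \<ge> 0}"

definition ideal_prod :: "'a::field set \<Rightarrow> 'a set \<Rightarrow> 'a set" where
  "ideal_prod A B = {sum_list (map (\<lambda>(x, y). x * y) ps) | ps. set ps \<subseteq> A \<times> B}"

definition smul_set :: "'a::field \<Rightarrow> 'a set \<Rightarrow> 'a set" where
  "smul_set r I = {r * x | x. x \<in> I}"

definition val_ideal :: "'a::field set \<Rightarrow> ('a \<Rightarrow> int) \<Rightarrow> (nat \<Rightarrow> int) \<Rightarrow> nat \<Rightarrow> 'a set" where
  "val_ideal R v a j = {r \<in> R. r = 0 \<or> v r \<ge> a j}"

end

theory Submission
  imports Defs
begin

(* Two facts about R inside its integral closure V carry the argument. Since R and V have the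
   same residue field, an element x with v x = v y differs from some R-multiple c y by an element
   of larger value; since V is finite over R, R contains every element of sufficiently large value.
   Hence an R-submodule A of B that attains every value of B and contains all elements of large
   value is all of B (successive approximation). For v r = v q this gives r I_k = q I_k as soon as
   r I_k is contained in q I_k, which is (2) => (1). For (3) => (2), if s y = q e with y in I_(i+2)
   then v e > v y, so e lies in I_(i+3) and I_(i+1) I_(i+3) = s I_(i+3) lets one cancel s; this
   yields I_(i+1) I_(i+2) within q I_(i+2), and I_i = R q + I_(i+1) finishes. *)

lemma valuation_mult:
  "normalized_valuation_of v V \<Longrightarrow> x \<noteq> 0 \<Longrightarrow> y \<noteq> 0 \<Longrightarrow> v (x * y) = v x + v y"
  unfolding normalized_valuation_of_def by blast

lemma valuation_add:
  "normalized_valuation_of v V \<Longrightarrow> x \<noteq> 0 \<Longrightarrow> y \<noteq> 0 \<Longrightarrow> x + y \<noteq> 0 \<Longrightarrow>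
    min (v x) (v y) \<le> v (x + y)"
  unfolding normalized_valuation_of_def by blast

lemma valuation_ring_eq: "normalized_valuation_of v V \<Longrightarrow> V = {x. x = 0 \<or> 0 \<le> v x}"
  unfolding normalized_valuation_of_def by blast

lemma valuation_one: "normalized_valuation_of v V \<Longrightarrow> v 1 = 0"
  using valuation_mult[of v V 1 1] by simp

lemma valuation_minus:
  assumes "normalized_valuation_of v V"
  shows "v (- x) = v x"
proof (cases "x = 0")
  case False
  have "v ((-1) * (-1)) = v (-1) + v (-1)"
    by (rule valuation_mult[OF assms]) auto
  then have "v (-1) = 0"
    using valuation_one[OF assms] by simp
  moreover have "v ((-1) * x) = v (-1) + v x"
    using valuation_mult[OF assms, of "-1" x] False by simp
  ultimately show ?thesis by simp
qed simp

lemma valuation_divide: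
  assumes "normalized_valuation_of v V" "x \<noteq> 0" "y \<noteq> 0"
  shows "v (x / y) = v x - v y"
  using valuation_mult[OF assms(1), of "x / y" y] assms by simp

lemma valuation_diff:
  assumes "normalized_valuation_of v V" "x \<noteq> 0" "y \<noteq> 0" "x - y \<noteq> 0"
  shows "min (v x) (v y) \<le> v (x - y)"
  using valuation_add[OF assms(1), of x "- y"] valuation_minus[OF assms(1), of y] assms by simp

lemma is_ideal_valuation_positive:
  assumes val: "normalized_valuation_of v V"
  shows "is_ideal V {x. x = 0 \<or> 0 < v x}"
  unfolding is_ideal_def
proof (intro conjI ballI)
  show "{x. x = 0 \<or> 0 < v x} \<subseteq> V"
    using valuation_ring_eq[OF val] by auto
next
  fix x y assume "x \<in> {x. x = 0 \<or> 0 < v x}" "y \<in> {x. x = 0 \<or> 0 < v x}"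
  then show "x + y \<in> {x. x = 0 \<or> 0 < v x}"
    using valuation_add[OF val, of x y] by (cases "x = 0 \<or> y = 0 \<or> x + y = 0") auto
next
  fix c x assume "c \<in> V" "x \<in> {x. x = 0 \<or> 0 < v x}"
  then show "c * x \<in> {x. x = 0 \<or> 0 < v x}"
    using valuation_mult[OF val, of c x] valuation_ring_eq[OF val] by (cases "c = 0 \<or> x = 0") auto
qed simp

lemma maximal_ideal_valuation_positive:
  assumes val: "normalized_valuation_of v V"
  shows "is_maximal_ideal V {x. x = 0 \<or> 0 < v x}"
  unfolding is_maximal_ideal_def
proof (intro conjI allI impI)
  have V: "V = {x. x = 0 \<or> 0 \<le> v x}"
    by (rule valuation_ring_eq[OF val])
  have "1 \<in> V" "1 \<notin> {x. x = 0 \<or> 0 < v x}"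
    using V valuation_one[OF val] by auto
  then show "{x. x = 0 \<or> 0 < v x} \<noteq> V"
    by blast
  fix J assume J: "is_ideal V J \<and> {x. x = 0 \<or> 0 < v x} \<subseteq> J"
  show "J = {x. x = 0 \<or> 0 < v x} \<or> J = V"
  proof (cases "J \<subseteq> {x. x = 0 \<or> 0 < v x}")
    case False
    then obtain w where w: "w \<in> J" "w \<noteq> 0" "v w = 0"
      using J V unfolding is_ideal_def by fastforce
    have "u \<in> J" if "u \<in> V" for u
    proof -
      have "u / w \<in> V"
        using that V valuation_divide[OF val _ w(2), of u] w(3) by auto
      then have "u / w * w \<in> J"
        using J w(1) unfolding is_ideal_def by blast
      then show ?thesis
        using w(2) by simp
    qed
    then show ?thesis
      using J unfolding is_ideal_def by blast
  qed (use J in blast)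
qed (rule is_ideal_valuation_positive[OF val])

lemma subring_sum_list: "subring R \<Longrightarrow> set xs \<subseteq> R \<Longrightarrow> sum_list xs \<in> R"
  by (induction xs) (auto simp: subring_def)

lemma common_denominator:
  assumes R: "subring R" and quot: "is_quotient_field_of R" and "finite B"
  shows "\<exists>d\<in>R. d \<noteq> 0 \<and> (\<forall>b\<in>B. d * b \<in> R)"
  using \<open>finite B\<close>
proof (induction B rule: finite_induct)
  case empty
  show ?case
    using R unfolding subring_def by (intro bexI[of _ 1]) auto
next
  case (insert b B)
  then obtain d where d: "d \<in> R" "d \<noteq> 0" "\<forall>b\<in>B. d * b \<in> R"
    by blast
  obtain \<alpha> \<beta> where ab: "\<alpha> \<in> R" "\<beta> \<in> R" "\<beta> \<noteq> 0" "b = \<alpha> / \<beta>"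
    using quot unfolding is_quotient_field_of_def by blast
  have "d * \<beta> * b = d * \<alpha>"
    using ab by simp
  moreover have "d * \<beta> * b' \<in> R" if "b' \<in> B" for b'
    using R d(3) ab(2) that unfolding subring_def by (metis mult.assoc mult.commute)
  ultimately show ?case
    using R d ab unfolding subring_def by (intro bexI[of _ "d * \<beta>"]) auto
qed

lemma mult_gen_ideal_in_subring:
  assumes R: "subring R" and d: "\<forall>b\<in>B. d * b \<in> R" and x: "x \<in> gen_ideal R B"
  shows "d * x \<in> R"
proof -
  obtain cs where cs: "x = sum_list (map (\<lambda>(c, b). c * b) cs)" "set cs \<subseteq> R \<times> B"
    using x unfolding gen_ideal_def by blast
  have "d * x = sum_list (map (\<lambda>(c, b). c * (d * b)) cs)"
    unfolding cs(1) by (induction cs) (auto simp: algebra_simps)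
  also have "\<dots> \<in> R"
    using R d cs(2) by (intro subring_sum_list) (auto simp: subring_def)
  finally show ?thesis .
qed

lemma subring_subset_integral_closure:
  assumes R: "subring R"
  shows "R \<subseteq> integral_closure R"
proof
  fix r assume r: "r \<in> R"
  have "coeff [:- r, 1:] k \<in> R" for k
    using R r by (cases k) (auto simp: subring_def coeff_pCons split: nat.split)
  then show "r \<in> integral_closure R"
    unfolding integral_closure_def by (intro CollectI exI[of _ "[:- r, 1:]"]) auto
qed

lemma mem_val_ideal: "x \<in> val_ideal R v a j \<longleftrightarrow> x \<in> R \<and> (x = 0 \<or> a j \<le> v x)"
  unfolding val_ideal_def by simp

lemma val_ideal_antimono: "a j \<le> a k \<Longrightarrow> val_ideal R v a k \<subseteq> val_ideal R v a j"
  unfolding val_ideal_def by auto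

lemma mem_smul_set: "z \<in> smul_set q S \<longleftrightarrow> (\<exists>y\<in>S. z = q * y)"
  unfolding smul_set_def by auto

lemma mult_mem_ideal_prod: "x \<in> A \<Longrightarrow> y \<in> B \<Longrightarrow> x * y \<in> ideal_prod A B"
  unfolding ideal_prod_def by (intro CollectI exI[of _ "[(x, y)]"]) auto

lemma ideal_prod_least:
  assumes "0 \<in> S" "\<And>x y. x \<in> S \<Longrightarrow> y \<in> S \<Longrightarrow> x + y \<in> S"
    and "\<And>x y. x \<in> A \<Longrightarrow> y \<in> B \<Longrightarrow> x * y \<in> S"
  shows "ideal_prod A B \<subseteq> S"
proof
  fix z assume "z \<in> ideal_prod A B"
  then obtain ps where ps: "z = sum_list (map (\<lambda>(x, y). x * y) ps)" "set ps \<subseteq> A \<times> B"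
    unfolding ideal_prod_def by blast
  from ps(2) have "sum_list (map (\<lambda>(x, y). x * y) ps) \<in> S"
    by (induction ps) (auto simp: assms)
  then show "z \<in> S"
    using ps(1) by simp
qed

lemma smul_subset_ideal_prod: "q \<in> A \<Longrightarrow> smul_set q B \<subseteq> ideal_prod A B"
  using mult_mem_ideal_prod by (auto simp: mem_smul_set)

locale valued_subring =
  fixes R :: "'a::field set" and v :: "'a \<Rightarrow> int"
  assumes subring: "subring R"
    and quotient_field: "is_quotient_field_of R"
    and closure_fin_gen: "fin_gen_module R (integral_closure R)"
    and valuation: "normalized_valuation_of v (integral_closure R)"
    and residue_field: "\<forall>N. is_maximal_ideal (integral_closure R) N \<longrightarrow>
                          (\<forall>x\<in>integral_closure R. \<exists>r\<in>R. x - r \<in> N)"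
begin

lemma zero_mem: "0 \<in> R"
  and add_mem: "x \<in> R \<Longrightarrow> y \<in> R \<Longrightarrow> x + y \<in> R"
  and diff_mem: "x \<in> R \<Longrightarrow> y \<in> R \<Longrightarrow> x - y \<in> R"
  and mult_mem: "x \<in> R \<Longrightarrow> y \<in> R \<Longrightarrow> x * y \<in> R"
  using subring unfolding subring_def by auto

lemma value_nonneg: "r \<in> R \<Longrightarrow> r \<noteq> 0 \<Longrightarrow> 0 \<le> v r"
  using subring_subset_integral_closure[OF subring] valuation_ring_eq[OF valuation] by blast

lemma residue_approx:
  assumes x: "x \<noteq> 0" and y: "y \<noteq> 0" and xy: "v x = v y"
  shows "\<exists>c\<in>R. x - c * y = 0 \<or> v x < v (x - c * y)"
proof -
  have "x / y \<in> integral_closure R"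
    using valuation_ring_eq[OF valuation] valuation_divide[OF valuation x y] xy by auto
  then obtain c where c: "c \<in> R" "x / y - c = 0 \<or> 0 < v (x / y - c)"
    using residue_field maximal_ideal_valuation_positive[OF valuation] by blast
  have factor: "x - c * y = y * (x / y - c)"
    using y by (simp add: field_simps)
  show ?thesis
  proof (cases "x / y - c = 0")
    case False
    then have "v (x - c * y) = v x + v (x / y - c)"
      using factor valuation_mult[OF valuation y False] xy by simp
    then show ?thesis
      using c False by (intro bexI[OF _ c(1)]) auto
  qed (use c factor in auto)
qed

lemma large_values_in_subring: "\<exists>C. \<forall>y. y \<noteq> 0 \<longrightarrow> C \<le> v y \<longrightarrow> y \<in> R"
proof -
  obtain B where B: "finite B" "integral_closure R = gen_ideal R B"
    using closure_fin_gen unfolding fin_gen_module_def by blast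
  obtain d where d: "d \<in> R" "d \<noteq> 0" "\<forall>b\<in>B. d * b \<in> R"
    using common_denominator[OF subring quotient_field B(1)] by blast
  have "y \<in> R" if "y \<noteq> 0" "v d \<le> v y" for y
  proof -
    have "y / d \<in> gen_ideal R B"
      using B(2) valuation_ring_eq[OF valuation] valuation_divide[OF valuation that(1) d(2)] that
      by auto
    then have "d * (y / d) \<in> R"
      by (rule mult_gen_ideal_in_subring[OF subring d(3)])
    then show ?thesis
      using d(2) by simp
  qed
  then show ?thesis
    by blast
qed

lemma subset_by_successive_approximation:
  assumes A_add: "\<And>x y. x \<in> A \<Longrightarrow> y \<in> A \<Longrightarrow> x + y \<in> A"
    and A_mult: "\<And>c x. c \<in> R \<Longrightarrow> x \<in> A \<Longrightarrow> c * x \<in> A"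
    and A_zero: "0 \<in> A" and AB: "A \<subseteq> B"
    and B_diff: "\<And>x y. x \<in> B \<Longrightarrow> y \<in> B \<Longrightarrow> x - y \<in> B"
    and B_values: "\<And>b. b \<in> B \<Longrightarrow> b \<noteq> 0 \<Longrightarrow> \<exists>x\<in>A. x \<noteq> 0 \<and> v x = v b"
    and A_large: "\<And>y. y \<noteq> 0 \<Longrightarrow> M \<le> v y \<Longrightarrow> y \<in> A"
  shows "B \<subseteq> A"
proof
  fix b assume "b \<in> B"
  then show "b \<in> A"
  proof (induction "nat (M - v b)" arbitrary: b rule: less_induct)
    case (less b)
    show ?case
    proof (cases "b = 0 \<or> M \<le> v b")
      case False
      obtain x where x: "x \<in> A" "x \<noteq> 0" "v x = v b"
        using B_values less.prems False by blast
      obtain c where c: "c \<in> R" "b - c * x = 0 \<or> v b < v (b - c * x)"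
        using residue_approx[of b x] False x by auto
      have cx: "c * x \<in> A"
        using A_mult c(1) x(1) by blast
      have "b - c * x \<in> A"
      proof (cases "b - c * x = 0")
        case False
        then have "nat (M - v (b - c * x)) < nat (M - v b)"
          using c(2) \<open>\<not> (b = 0 \<or> M \<le> v b)\<close> by auto
        then show ?thesis
          using less.hyps B_diff less.prems AB cx by blast
      qed (simp add: A_zero)
      then have "b - c * x + c * x \<in> A"
        using A_add cx by blast
      then show ?thesis
        by simp
    qed (metis A_zero A_large)
  qed
qed

lemma val_ideal_subset: "val_ideal R v a j \<subseteq> R"
  unfolding val_ideal_def by blast

lemma val_ideal_zero: "0 \<in> val_ideal R v a j"
  using zero_mem by (simp add: mem_val_ideal)

lemma val_ideal_add: "x \<in> val_ideal R v a j \<Longrightarrow> y \<in> val_ideal R v a j \<Longrightarrow> x + y \<in> val_ideal R v a j"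
  using add_mem valuation_add[OF valuation, of x y]
  by (cases "x = 0 \<or> y = 0 \<or> x + y = 0") (auto simp: mem_val_ideal)

lemma val_ideal_diff: "x \<in> val_ideal R v a j \<Longrightarrow> y \<in> val_ideal R v a j \<Longrightarrow> x - y \<in> val_ideal R v a j"
  using diff_mem valuation_diff[OF valuation, of x y] valuation_minus[OF valuation, of y]
  by (cases "x = 0 \<or> y = 0 \<or> x - y = 0") (auto simp: mem_val_ideal)

lemma val_ideal_mult: "c \<in> R \<Longrightarrow> x \<in> val_ideal R v a j \<Longrightarrow> c * x \<in> val_ideal R v a j"
  using mult_mem valuation_mult[OF valuation, of c x] value_nonneg[of c]
  by (cases "c = 0 \<or> x = 0") (auto simp: mem_val_ideal)

lemma val_ideal_large_values: "\<exists>M. \<forall>y. y \<noteq> 0 \<longrightarrow> M \<le> v y \<longrightarrow> y \<in> val_ideal R v a j"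
proof -
  obtain C where "\<forall>y. y \<noteq> 0 \<longrightarrow> C \<le> v y \<longrightarrow> y \<in> R"
    using large_values_in_subring by blast
  then show ?thesis
    by (intro exI[of _ "max C (a j)"]) (auto simp: mem_val_ideal)
qed

lemma smul_val_ideal_zero: "0 \<in> smul_set q (val_ideal R v a j)"
  using val_ideal_zero by (force simp: mem_smul_set)

lemma smul_val_ideal_add:
  assumes "x \<in> smul_set q (val_ideal R v a j)" "y \<in> smul_set q (val_ideal R v a j)"
  shows "x + y \<in> smul_set q (val_ideal R v a j)"
proof -
  obtain x' y' where "x' \<in> val_ideal R v a j" "y' \<in> val_ideal R v a j" "x = q * x'" "y = q * y'"
    using assms by (auto simp: mem_smul_set)
  then show ?thesis
    unfolding mem_smul_set using val_ideal_add[of x' a j y']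
    by (intro bexI[of _ "x' + y'"]) (simp_all add: distrib_left)
qed

lemma smul_val_ideal_eq_of_subset:
  assumes q: "q \<noteq> 0" and r: "r \<noteq> 0" and qr: "v q = v r"
    and sub: "smul_set r (val_ideal R v a j) \<subseteq> smul_set q (val_ideal R v a j)"
  shows "smul_set r (val_ideal R v a j) = smul_set q (val_ideal R v a j)"
proof -
  let ?J = "val_ideal R v a j"
  obtain M where M: "\<And>y. y \<noteq> 0 \<Longrightarrow> M \<le> v y \<Longrightarrow> y \<in> ?J"
    using val_ideal_large_values by blast
  have "smul_set q ?J \<subseteq> smul_set r ?J"
  proof (rule subset_by_successive_approximation[where M = "M + v r"])
    fix y assume y: "y \<noteq> 0" "M + v r \<le> v y"
    then have "y / r \<in> ?J"
      using M[of "y / r"] valuation_divide[OF valuation y(1) r] r by simp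
    then show "y \<in> smul_set r ?J"
      using r by (auto simp: mem_smul_set intro: bexI[of _ "y / r"])
  next
    fix b assume "b \<in> smul_set q ?J" "b \<noteq> 0"
    then obtain y where y: "y \<in> ?J" "b = q * y" "y \<noteq> 0"
      by (auto simp: mem_smul_set)
    then have "r * y \<in> smul_set r ?J" "r * y \<noteq> 0" "v (r * y) = v b"
      using valuation_mult[OF valuation] q r qr by (auto simp: mem_smul_set)
    then show "\<exists>x\<in>smul_set r ?J. x \<noteq> 0 \<and> v x = v b"
      by blast
  qed (use sub val_ideal_zero val_ideal_add val_ideal_diff val_ideal_mult in
       \<open>auto simp: mem_smul_set simp flip: distrib_left right_diff_distrib intro: mult.left_commute\<close>)
  then show ?thesis
    using sub by blast
qed

lemma ideal_prod_eq_smul_val_ideal_transfer: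
  assumes "q \<noteq> 0" "r \<noteq> 0" "v q = v r" "r \<in> A"
    and "ideal_prod A (val_ideal R v a j) = smul_set q (val_ideal R v a j)"
  shows "ideal_prod A (val_ideal R v a j) = smul_set r (val_ideal R v a j)"
proof -
  have "smul_set r (val_ideal R v a j) \<subseteq> smul_set q (val_ideal R v a j)"
    using smul_subset_ideal_prod[of r A] assms(4,5) by blast
  then show ?thesis
    using smul_val_ideal_eq_of_subset[of q r a j] assms(1-3,5) by blast
qed

end

locale value_semigroup_enumeration = valued_subring +
  fixes a :: "nat \<Rightarrow> int"
  assumes a_strict_mono: "strict_mono a"
    and a_range: "range a = v ` (R - {0})"
begin

abbreviation I :: "nat \<Rightarrow> 'a set" where
  "I \<equiv> val_ideal R v a"

lemma exists_of_value: "\<exists>q\<in>R. q \<noteq> 0 \<and> v q = a j"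
proof -
  have "a j \<in> v ` (R - {0})"
    by (simp flip: a_range)
  then show ?thesis
    by force
qed

lemma value_ge_Suc_of_gt:
  assumes "x \<in> R" "x \<noteq> 0" "a j < v x"
  shows "a (Suc j) \<le> v x"
proof -
  have "v x \<in> range a"
    unfolding a_range using assms(1,2) by simp
  then obtain k where k: "v x = a k"
    by blast
  then have "Suc j \<le> k"
    using assms(3) strict_mono_less[OF a_strict_mono] by (simp add: Suc_le_eq)
  then show ?thesis
    using k strict_mono_less_eq[OF a_strict_mono] by simp
qed

lemma I_antimono: "j \<le> k \<Longrightarrow> I k \<subseteq> I j"
  by (rule val_ideal_antimono) (simp add: strict_mono_less_eq[OF a_strict_mono])

lemma mem_I_Suc_iff: "x \<in> I (Suc j) \<longleftrightarrow> x \<in> I j \<and> (x = 0 \<or> a j < v x)"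
  using value_ge_Suc_of_gt[of x j] strict_mono_less[OF a_strict_mono, of j "Suc j"]
  by (auto simp: mem_val_ideal)

lemma I_decompose:
  assumes q: "q \<in> R" "q \<noteq> 0" "v q = a j" and x: "x \<in> I j"
  shows "\<exists>c\<in>R. x - c * q \<in> I (Suc j)"
proof (cases "x \<noteq> 0 \<and> v x = a j")
  case True
  then obtain c where c: "c \<in> R" "x - c * q = 0 \<or> v x < v (x - c * q)"
    using residue_approx[of x q] q by auto
  have "q \<in> I j"
    using q by (simp add: mem_val_ideal)
  then have "x - c * q \<in> I j"
    using x c(1) val_ideal_diff val_ideal_mult by blast
  then show ?thesis
    using c True by (intro bexI[OF _ c(1)]) (auto simp: mem_I_Suc_iff)
next
  case False
  then have "x - 0 * q \<in> I (Suc j)"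
    using x unfolding mem_I_Suc_iff by (auto simp: mem_val_ideal)
  then show ?thesis
    using zero_mem by blast
qed

lemma ideal_prod_subset_smul_of_Suc:
  assumes q: "q \<in> R" "q \<noteq> 0" "v q = a j"
    and Suc: "ideal_prod (I (Suc j)) (I k) \<subseteq> smul_set q (I k)"
  shows "ideal_prod (I j) (I k) \<subseteq> smul_set q (I k)"
proof (rule ideal_prod_least)
  fix x y assume x: "x \<in> I j" and y: "y \<in> I k"
  obtain c where c: "c \<in> R" "x - c * q \<in> I (Suc j)"
    using I_decompose[OF q x] by blast
  have "(x - c * q) * y \<in> smul_set q (I k)"
    using Suc mult_mem_ideal_prod[OF c(2) y] by blast
  then obtain z where z: "z \<in> I k" "(x - c * q) * y = q * z"
    unfolding mem_smul_set by blast
  have "x * y = q * (c * y + z)"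
    using z(2) by (simp add: algebra_simps)
  moreover have "c * y + z \<in> I k"
    using c(1) y z(1) val_ideal_add val_ideal_mult by blast
  ultimately show "x * y \<in> smul_set q (I k)"
    by (auto simp: mem_smul_set)
qed (use smul_val_ideal_zero smul_val_ideal_add in auto)

lemma ideal_prod_subset_smul_of_divides:
  assumes s: "s \<noteq> 0" and q: "q \<noteq> 0" "v q < v s"
    and s_prod: "ideal_prod (I j) (I (j + 2)) \<subseteq> smul_set s (I (j + 2))"
    and s_div: "smul_set s (I (j + 1)) \<subseteq> smul_set q R"
  shows "ideal_prod (I j) (I (j + 1)) \<subseteq> smul_set q (I (j + 1))"
proof (rule ideal_prod_least)
  fix x y assume x: "x \<in> I j" and y: "y \<in> I (j + 1)"
  show "x * y \<in> smul_set q (I (j + 1))"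
  proof (cases "y = 0")
    case False
    have "s * y \<in> smul_set s (I (j + 1))"
      using y by (auto simp: mem_smul_set)
    then have "s * y \<in> smul_set q R"
      using s_div by blast
    then obtain e where e: "e \<in> R" "s * y = q * e"
      unfolding mem_smul_set by blast
    then have "e \<noteq> 0"
      using s False by auto
    moreover have "v (s * y) = v (q * e)"
      using e(2) by simp
    ultimately have "v s + v y = v q + v e"
      using valuation_mult[OF valuation] s q(1) False by simp
    then have "a (j + 1) < v e"
      using y False q(2) by (simp add: mem_val_ideal)
    then have "e \<in> I (j + 2)"
      using e(1) \<open>e \<noteq> 0\<close> value_ge_Suc_of_gt[of e "j + 1"] by (simp add: mem_val_ideal)
    then have "x * e \<in> smul_set s (I (j + 2))"
      using s_prod mult_mem_ideal_prod[OF x] by blast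
    then obtain z where z: "z \<in> I (j + 2)" "x * e = s * z"
      unfolding mem_smul_set by blast
    have "s * (x * y) = x * (s * y)"
      by (simp add: ac_simps)
    also have "\<dots> = q * (x * e)"
      using e(2) by (simp add: ac_simps)
    also have "\<dots> = s * (q * z)"
      using z(2) by (simp add: ac_simps)
    finally have "s * (x * y) = s * (q * z)" .
    then have "x * y = q * z"
      using s by simp
    moreover have "z \<in> I (j + 1)"
      using z(1) I_antimono[of "j + 1" "j + 2"] by auto
    ultimately show ?thesis
      by (auto simp: mem_smul_set)
  qed (simp add: smul_val_ideal_zero)
qed (use smul_val_ideal_zero smul_val_ideal_add in auto)

lemma ideal_prod_eq_smul_all_iff_ex:
  "(\<forall>r\<in>R. r \<noteq> 0 \<and> v r = a i \<longrightarrow> ideal_prod (I i) (I k) = smul_set r (I k)) \<longleftrightarrow>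
   (\<exists>q\<in>R. q \<noteq> 0 \<and> v q = a i \<and> ideal_prod (I i) (I k) = smul_set q (I k))"
proof
  assume all: "\<forall>r\<in>R. r \<noteq> 0 \<and> v r = a i \<longrightarrow> ideal_prod (I i) (I k) = smul_set r (I k)"
  obtain q where "q \<in> R" "q \<noteq> 0" "v q = a i"
    using exists_of_value by blast
  with all show "\<exists>q\<in>R. q \<noteq> 0 \<and> v q = a i \<and> ideal_prod (I i) (I k) = smul_set q (I k)"
    by blast
next
  assume "\<exists>q\<in>R. q \<noteq> 0 \<and> v q = a i \<and> ideal_prod (I i) (I k) = smul_set q (I k)"
  then obtain q where q: "q \<noteq> 0" "v q = a i" "ideal_prod (I i) (I k) = smul_set q (I k)"
    by blast
  show "\<forall>r\<in>R. r \<noteq> 0 \<and> v r = a i \<longrightarrow> ideal_prod (I i) (I k) = smul_set r (I k)"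
  proof (intro ballI impI)
    fix r assume "r \<in> R" "r \<noteq> 0 \<and> v r = a i"
    then show "ideal_prod (I i) (I k) = smul_set r (I k)"
      using ideal_prod_eq_smul_val_ideal_transfer[of q r "I i"] q by (simp add: mem_val_ideal)
  qed
qed

lemma ideal_prod_eq_smul_all_iff_smul_subset:
  assumes s: "s \<in> R" "s \<noteq> 0" "v s = a (i + 1)"
    and s_prod: "ideal_prod (I (i + 1)) (I (i + 3)) = smul_set s (I (i + 3))"
  shows "(\<forall>r\<in>R. r \<noteq> 0 \<and> v r = a i \<longrightarrow> ideal_prod (I i) (I (i + 2)) = smul_set r (I (i + 2))) \<longleftrightarrow>
         (\<exists>q\<in>R. q \<noteq> 0 \<and> v q = a i \<and> smul_set s (I (i + 2)) \<subseteq> smul_set q R)"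
    (is "?all \<longleftrightarrow> ?ex")
proof
  assume ?all
  obtain q where q: "q \<in> R" "q \<noteq> 0" "v q = a i"
    using exists_of_value by blast
  have "s \<in> I i"
    using s strict_mono_less_eq[OF a_strict_mono, of i "i + 1"] by (simp add: mem_val_ideal)
  then have "smul_set s (I (i + 2)) \<subseteq> ideal_prod (I i) (I (i + 2))"
    by (rule smul_subset_ideal_prod)
  also have "\<dots> = smul_set q (I (i + 2))"
    using \<open>?all\<close> q by blast
  also have "\<dots> \<subseteq> smul_set q R"
    using val_ideal_subset unfolding smul_set_def by blast
  finally show ?ex
    using q by blast
next
  assume ?ex
  then obtain q where q: "q \<in> R" "q \<noteq> 0" "v q = a i"
    and s_div: "smul_set s (I (i + 2)) \<subseteq> smul_set q R"
    by blast
  have "v q < v s"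
    using q(3) s(3) strict_mono_less[OF a_strict_mono, of i "i + 1"] by simp
  then have "ideal_prod (I (i + 1)) (I (i + 2)) \<subseteq> smul_set q (I (i + 2))"
    using ideal_prod_subset_smul_of_divides[of s q "i + 1"] s(2) q(2) s_prod s_div
    by (simp add: numeral_eq_Suc)
  then have "ideal_prod (I i) (I (i + 2)) \<subseteq> smul_set q (I (i + 2))"
    using ideal_prod_subset_smul_of_Suc[OF q, of "i + 2"] by simp
  moreover have "smul_set q (I (i + 2)) \<subseteq> ideal_prod (I i) (I (i + 2))"
    using q by (intro smul_subset_ideal_prod) (simp add: mem_val_ideal)
  ultimately show ?all
    using ideal_prod_eq_smul_all_iff_ex[of i "i + 2"] q by blast
qed

end

theorem proposition3p4:
  fixes R :: "'a::field set" and v :: "'a \<Rightarrow> int" and a :: "nat \<Rightarrow> int" and n i :: nat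
  assumes subR: "subring R"
    and quot: "is_quotient_field_of R"
    and loc: "local_ring R"
    and noeth: "noetherian_ring R"
    and dim1: "krull_dim_one R"
    and fg: "fin_gen_module R (integral_closure R)"
    and locbar: "local_ring (integral_closure R)"
    and val: "normalized_valuation_of v (integral_closure R)"
    and resfield: "\<forall>N. is_maximal_ideal (integral_closure R) N \<longrightarrow>
                      (\<forall>x\<in>integral_closure R. \<exists>r\<in>R. x - r \<in> N)"
    and a_mono: "strict_mono a"
    and a_range: "range a = v ` (R - {0})"
    and n_def: "n = (LEAST m. \<forall>j. a (m + j) = a m + int j)"
    and i_ge: "1 \<le> i" and i_le: "i + 2 \<le> n"
  shows "((\<forall>r\<in>R. r \<noteq> 0 \<and> v r = a i \<longrightarrow>
             ideal_prod (val_ideal R v a i) (val_ideal R v a (i + 2)) = smul_set r (val_ideal R v a (i + 2)))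
          \<longleftrightarrow>
          (\<exists>q\<in>R. q \<noteq> 0 \<and> v q = a i \<and>
             ideal_prod (val_ideal R v a i) (val_ideal R v a (i + 2)) = smul_set q (val_ideal R v a (i + 2))))
       \<and>
       (\<forall>s\<in>R. i + 3 \<le> n \<and> s \<noteq> 0 \<and> v s = a (i + 1) \<and>
           ideal_prod (val_ideal R v a (i + 1)) (val_ideal R v a (i + 3)) = smul_set s (val_ideal R v a (i + 3))
         \<longrightarrow>
           ((\<forall>r\<in>R. r \<noteq> 0 \<and> v r = a i \<longrightarrow>
               ideal_prod (val_ideal R v a i) (val_ideal R v a (i + 2)) = smul_set r (val_ideal R v a (i + 2)))
            \<longleftrightarrow>
            (\<exists>q\<in>R. q \<noteq> 0 \<and> v q = a i \<and>
               smul_set s (val_ideal R v a (i + 2)) \<subseteq> smul_set q R)))"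
proof -
  interpret value_semigroup_enumeration R v a
    using subR quot fg val resfield a_mono a_range by unfold_locales
  show ?thesis
    using ideal_prod_eq_smul_all_iff_ex[of i "i + 2"] ideal_prod_eq_smul_all_iff_smul_subset[of _ i]
    by blast
qed

end
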